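(* Let $G$ be a bipartite graph with $p(G)=|V(G)|\ge 3$ vertices and $q(G)=|E(G)|\ge 2p(G)-2$ edges. Then $G$ is not bipartite Ramsey size linear.
   Context: For bipartite graphs $G_1,G_2$, the bipartite Ramsey number $\operatorname{br}(G_1,G_2)$ is the smallest integer $N$ such that every red/blue coloring of the edges of $K_{N,N}$ contains a red copy of $G_1$ or a blue copy of $G_2$. A bipartite graph $H$ is called bipartite Ramsey size linear if there exists a constant $C$ such that for every bipartite graph $G'$ with $m$ edges and no isolated vertices, $\operatorname{br}(H,G')\le C\cdot m$. *)

theory Defs
  imports Complex_Main
begin

definition sgraph :: "'a set \<Rightarrow> 'a set set \<Rightarrow> bool" where
  "sgraph V E \<longleftrightarrow> finite V \<and> (\<forall>e\<in>E. e \<subseteq> V \<and> card e = 2)"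

definition bipartite_graph :: "'a set \<Rightarrow> 'a set set \<Rightarrow> bool" where
  "bipartite_graph V E \<longleftrightarrow> sgraph V E \<and> (\<exists>A. A \<subseteq> V \<and> (\<forall>e\<in>E. card (e \<inter> A) = 1))"

definition no_isolated :: "'a set \<Rightarrow> 'a set set \<Rightarrow> bool" where
  "no_isolated V E \<longleftrightarrow> (\<forall>v\<in>V. \<exists>e\<in>E. v \<in> e)"

text \<open>K_{N,N} has vertices Inl i, Inr j (i, j < N) and edges {Inl i, Inr j}.
  A red/blue colouring is c :: nat => nat => bool, c i j = True meaning the edge
  {Inl i, Inr j} is red.\<close>
definition KNN_verts :: "nat \<Rightarrow> (nat + nat) set" where
  "KNN_verts N = Inl ` {..<N} \<union> Inr ` {..<N}"

definition colour_copy ::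
  "nat \<Rightarrow> (nat \<Rightarrow> nat \<Rightarrow> bool) \<Rightarrow> bool \<Rightarrow> 'a set \<Rightarrow> 'a set set \<Rightarrow> bool" where
  "colour_copy N c col V E \<longleftrightarrow>
     (\<exists>f. inj_on f V \<and> f ` V \<subseteq> KNN_verts N \<and>
          (\<forall>e\<in>E. \<exists>i<N. \<exists>j<N. f ` e = {Inl i, Inr j} \<and> c i j = col))"

definition bip_arrows ::
  "nat \<Rightarrow> 'a set \<Rightarrow> 'a set set \<Rightarrow> 'b set \<Rightarrow> 'b set set \<Rightarrow> bool" where
  "bip_arrows N V1 E1 V2 E2 \<longleftrightarrow>
     (\<forall>c. colour_copy N c True V1 E1 \<or> colour_copy N c False V2 E2)"

definition br :: "'a set \<Rightarrow> 'a set set \<Rightarrow> 'b set \<Rightarrow> 'b set set \<Rightarrow> nat" where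
  "br V1 E1 V2 E2 = (LEAST N. bip_arrows N V1 E1 V2 E2)"

text \<open>Bipartite Ramsey size linear; the graphs G' range over graphs on vertex type nat
  (every finite graph is isomorphic to one of these).\<close>
definition bip_ramsey_size_linear :: "'a set \<Rightarrow> 'a set set \<Rightarrow> bool" where
  "bip_ramsey_size_linear V E \<longleftrightarrow>
     (\<exists>C::real. \<forall>(V'::nat set) E'. bipartite_graph V' E' \<and> no_isolated V' E' \<longrightarrow>
        real (br V E V' E') \<le> C * real (card E'))"

end

(*
  Let H = (V, E) have p vertices and q >= 2p - 2 edges, and let C be given.
  Colour the M x M grid of edges of K_{M,M} at random, each edge red with
  probability rho = k^(1-D), where t = k^D, M = k^(2D+1) and s = L k^D.
  For large k, with positive probability every t x t box contains at least
  q s red edges, but fewer than s pairwise disjoint red copies of H meet it: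
  a copy through a given edge has only p - 2 free vertices, and q >= 2p - 2
  makes the expected number of red copies meeting a box O(k^(D-2)), far below s.
  Deleting the edges of a maximal family of disjoint red copies destroys every
  red copy of H, and since each copy has q edges, every box keeps a red edge,
  so there is no blue K_{t,t}. Thus br(H, K_{t,t}) > M >= C t^2, while
  size linearity would give br(H, K_{t,t}) <= C t^2.
*)
theory Submission
  imports Defs "HOL-Probability.Product_PMF"
begin

section \<open>Elementary estimates\<close>

lemma power_div_3_le_fact: "(real s / 3) ^ s \<le> fact s"
proof -
  have sums: "(\<lambda>n. real s ^ n /\<^sub>R fact n) sums exp (real s)" by (rule exp_converges)
  have "(\<Sum>n\<in>{s}. real s ^ n /\<^sub>R fact n) \<le> (\<Sum>n. real s ^ n /\<^sub>R fact n)"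
    by (rule sum_le_suminf) (use sums in \<open>auto simp: sums_iff\<close>)
  then have "real s ^ s / fact s \<le> exp (real s)"
    using sums by (simp add: sums_iff divide_inverse mult.commute)
  also have "exp (real s) = exp 1 ^ s" by (simp add: exp_of_nat_mult[symmetric])
  also have "\<dots> \<le> 3 ^ s" by (rule power_mono[OF exp_le]) simp
  finally have "real s ^ s \<le> 3 ^ s * fact s" by (simp add: divide_le_eq mult.commute)
  then show ?thesis by (simp add: power_divide divide_le_eq mult.commute)
qed

lemma power_div_fact_le:
  fixes a :: real
  assumes "0 \<le> a" "1 \<le> s"
  shows "a ^ s / fact s \<le> (3 * a / s) ^ s"
proof -
  have "0 < (real s / 3) ^ s" using assms(2) by simp
  then have "a ^ s / fact s \<le> a ^ s / (real s / 3) ^ s"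
    using power_div_3_le_fact assms(1) by (intro divide_left_mono) simp_all
  also have "\<dots> = (3 * a / s) ^ s" by (simp add: field_simps)
  finally show ?thesis .
qed

lemma mult_power_le_two_power:
  fixes A c k :: nat
  assumes "1 \<le> A" "A * (c + 1) ^ (c + 1) \<le> k"
  shows "A * k ^ c \<le> 2 ^ k"
proof -
  have "c + 1 \<le> (c + 1) ^ (c + 1)" by (rule self_le_power) simp_all
  moreover have "(c + 1) ^ (c + 1) \<le> A * (c + 1) ^ (c + 1)" using assms(1) by simp
  ultimately have "c + 1 \<le> k" using assms(2) by linarith
  have "real A * real ((c + 1) ^ (c + 1)) \<le> real k"
    using assms(2) by (simp only: of_nat_mult[symmetric] of_nat_le_iff)
  then have "real k ^ c * (real A * real ((c + 1) ^ (c + 1))) \<le> real k ^ c * real k"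
    by (rule mult_left_mono) simp
  then have "real A * real k ^ c * real ((c + 1) ^ (c + 1)) \<le> real k ^ c * real k"
    by (simp add: mult_ac)
  moreover have "(real k / real (c + 1)) ^ (c + 1) = real k ^ c * real k / real ((c + 1) ^ (c + 1))"
    by (simp only: power_divide of_nat_power) (simp add: power_add)
  moreover have "0 < real ((c + 1) ^ (c + 1))" by (simp only: of_nat_0_less_iff) simp
  ultimately have "real A * real k ^ c \<le> (real k / real (c + 1)) ^ (c + 1)"
    by (metis pos_le_divide_eq)
  also have "\<dots> \<le> real (k choose (c + 1))"
    using binomial_ge_n_over_k_pow_k[OF \<open>c + 1 \<le> k\<close>] by simp
  also have "\<dots> \<le> 2 ^ k"
    using binomial_le_pow2[of k "c + 1"] by (simp flip: of_nat_le_iff)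
  finally show ?thesis by (metis of_nat_le_iff of_nat_mult of_nat_numeral of_nat_power)
qed

lemma one_minus_inverse_power_le_half:
  assumes "1 \<le> n"
  shows "(1 - 1 / real n) ^ n \<le> 1 / 2"
proof -
  have "(1 - 1 / real n) ^ n \<le> exp (- 1 / real n) ^ n"
    using exp_ge_add_one_self[of "- 1 / real n"] assms by (intro power_mono) auto
  also have "\<dots> = exp (- 1)" using assms by (simp add: exp_of_nat_mult[symmetric])
  also have "\<dots> \<le> 1 / 2"
    using exp_ge_add_one_self[of 1] by (simp add: exp_minus field_simps)
  finally show ?thesis .
qed

lemma power_mult_le_quarter:
  fixes x y N :: real
  assumes "0 \<le> x" "0 \<le> y" "x * y \<le> 1 / 4" "N \<le> x ^ n" "1 \<le> n"
  shows "N * y ^ n \<le> 1 / 4"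
proof -
  have "N * y ^ n \<le> x ^ n * y ^ n" using assms(2,4) by (simp add: mult_right_mono)
  also have "\<dots> = (x * y) ^ n" by (simp add: power_mult_distrib)
  also have "\<dots> \<le> x * y"
    using power_decreasing[OF assms(5), of "x * y"] assms(1-3) by simp
  finally show ?thesis using assms(3) by linarith
qed

lemma binomial_square_le: "t \<le> M \<Longrightarrow> (M choose t) ^ 2 \<le> M ^ (2 * t)"
  by (metis binomial_le_pow power_mono power_mult mult.commute zero_le)

lemma real_card_subsets_le:
  assumes "finite C"
  shows "real (card {F. F \<subseteq> C \<and> card F = s}) \<le> real (card C) ^ s / fact s"
proof -
  have "real ((card C choose s) * fact s) \<le> real (card C ^ s)"
    by (simp only: of_nat_le_iff binomial_fact_pow)
  then show ?thesis by (simp add: n_subsets[OF assms] pos_le_divide_eq)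
qed

section \<open>Bipartite Ramsey numbers\<close>

lemma obtain_monochromatic_half:
  fixes v :: "'a \<Rightarrow> bool"
  assumes "finite X" "2 * s \<le> card X"
  obtains col A where "A \<subseteq> X" "card A = s" "\<forall>i\<in>A. v i = col"
proof -
  have "card {i\<in>X. v i} + card {i\<in>X. \<not> v i} = card ({i\<in>X. v i} \<union> {i\<in>X. \<not> v i})"
    using assms(1) by (intro card_Un_disjoint[symmetric]) auto
  also have "\<dots> = card X" by (rule arg_cong[where f = card]) blast
  finally consider "s \<le> card {i\<in>X. v i}" | "s \<le> card {i\<in>X. \<not> v i}"
    using assms(2) by linarith
  then show thesis
  proof cases
    case 1
    then obtain A where "A \<subseteq> {i\<in>X. v i}" "card A = s" by (rule obtain_subset_with_card_n)
    then show thesis by (intro that[of A True]) auto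
  next
    case 2
    then obtain A where "A \<subseteq> {i\<in>X. \<not> v i}" "card A = s" by (rule obtain_subset_with_card_n)
    then show thesis by (intro that[of A False]) auto
  qed
qed

lemma obtain_large_fibre:
  assumes "finite A" "finite Y" "Y \<noteq> {}" "g \<in> A \<rightarrow> Y" "card Y * s \<le> card A"
  obtains y B where "B \<subseteq> A" "card B = s" "\<forall>b\<in>B. g b = y"
proof -
  obtain y where "card A \<le> card (g -` {y} \<inter> A) * card Y"
    using pigeonhole_card[OF assms(4,1-3)] by blast
  then have "card Y * s \<le> card (g -` {y} \<inter> A) * card Y" using assms(5) by linarith
  then have "card Y * s \<le> card Y * card (g -` {y} \<inter> A)"
    by (simp only: mult.commute[of "card (g -` {y} \<inter> A)"])
  then have "s \<le> card (g -` {y} \<inter> A)"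
    by (rule mult_left_le_imp_le) (use assms(2,3) in \<open>simp add: card_gt_0_iff\<close>)
  then obtain B where "B \<subseteq> g -` {y} \<inter> A" "card B = s" by (rule obtain_subset_with_card_n)
  then show thesis by (intro that[of B y]) auto
qed

text \<open>Columns are grouped by their colour pattern on the first \<open>2 * s\<close> rows: some \<open>s\<close> columns
  share a pattern, and this pattern is constant on \<open>s\<close> of those rows.\<close>
lemma bipartite_ramsey_box:
  obtains N where "\<And>c::nat \<Rightarrow> nat \<Rightarrow> bool. \<exists>A B. A \<subseteq> {..<N} \<and> B \<subseteq> {..<N} \<and>
    card A = s \<and> card B = s \<and> ((\<forall>a\<in>A. \<forall>b\<in>B. c a b) \<or> (\<forall>a\<in>A. \<forall>b\<in>B. \<not> c a b))"
proof -
  define X where "X = {..<2 * s}"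
  define Vs where "Vs = X \<rightarrow>\<^sub>E (UNIV :: bool set)"
  define N where "N = 2 * s + card Vs * s"
  have "\<exists>A B. A \<subseteq> {..<N} \<and> B \<subseteq> {..<N} \<and> card A = s \<and> card B = s \<and>
    ((\<forall>a\<in>A. \<forall>b\<in>B. c a b) \<or> (\<forall>a\<in>A. \<forall>b\<in>B. \<not> c a b))" for c :: "nat \<Rightarrow> nat \<Rightarrow> bool"
  proof -
    define g where "g j = restrict (\<lambda>i. c i j) X" for j
    have "finite Vs" "Vs \<noteq> {}" unfolding Vs_def X_def by (auto simp: finite_PiE PiE_eq_empty_iff)
    moreover have "g \<in> {..<N} \<rightarrow> Vs" unfolding g_def Vs_def by auto
    moreover have "card Vs * s \<le> card {..<N}" unfolding N_def by simp
    ultimately obtain v B where B: "B \<subseteq> {..<N}" "card B = s" "\<forall>b\<in>B. g b = v"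
      by (rule obtain_large_fibre[OF finite_lessThan])
    have "finite X" "2 * s \<le> card X" unfolding X_def by simp_all
    then obtain col A where A: "A \<subseteq> X" "card A = s" "\<forall>i\<in>A. v i = col"
      by (rule obtain_monochromatic_half)
    have "c a b = col" if "a \<in> A" "b \<in> B" for a b
    proof -
      have "c a b = g b a" using A(1) that(1) unfolding g_def by auto
      then show ?thesis using A(3) B(3) that by simp
    qed
    then have "(\<forall>a\<in>A. \<forall>b\<in>B. c a b) \<or> (\<forall>a\<in>A. \<forall>b\<in>B. \<not> c a b)" by (cases col) auto
    moreover have "A \<subseteq> {..<N}" using A(1) unfolding X_def N_def by auto
    ultimately show ?thesis using A(2) B(1,2) by blast
  qed
  then show thesis by (rule that)
qed

lemma Inl_Inr_doubleton_eq_iff [simp]: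
  "({Inl i, Inr j} :: ('a + 'b) set) = {Inl i', Inr j'} \<longleftrightarrow> i = i' \<and> j = j'"
  by (auto simp: doubleton_eq_iff)

lemma Inl_in_KNN_verts [simp]: "Inl i \<in> KNN_verts M \<longleftrightarrow> i < M"
  and Inr_in_KNN_verts [simp]: "Inr j \<in> KNN_verts M \<longleftrightarrow> j < M"
  unfolding KNN_verts_def by auto

lemma colour_copy_mono:
  assumes "colour_copy N c col V E" "N \<le> N'"
  shows "colour_copy N' c col V E"
proof -
  obtain f where f: "inj_on f V" "f ` V \<subseteq> KNN_verts N"
    and edges: "\<forall>e\<in>E. \<exists>i<N. \<exists>j<N. f ` e = {Inl i, Inr j} \<and> c i j = col"
    using assms(1) unfolding colour_copy_def by blast
  have "KNN_verts N \<subseteq> KNN_verts N'" using assms(2) unfolding KNN_verts_def by auto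
  then have "f ` V \<subseteq> KNN_verts N'" using f(2) by (rule order.trans[rotated])
  moreover have "\<forall>e\<in>E. \<exists>i<N'. \<exists>j<N'. f ` e = {Inl i, Inr j} \<and> c i j = col"
    using edges assms(2) by (meson order.strict_trans2)
  ultimately show ?thesis using f(1) unfolding colour_copy_def by blast
qed

lemma bip_arrows_mono:
  assumes "bip_arrows N V1 E1 V2 E2" "N \<le> N'"
  shows "bip_arrows N' V1 E1 V2 E2"
  unfolding bip_arrows_def
proof
  fix c
  from assms(1) have "colour_copy N c True V1 E1 \<or> colour_copy N c False V2 E2"
    unfolding bip_arrows_def ..
  then show "colour_copy N' c True V1 E1 \<or> colour_copy N' c False V2 E2"
    using colour_copy_mono[OF _ assms(2), of c True V1 E1]
      colour_copy_mono[OF _ assms(2), of c False V2 E2] by blast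
qed

lemma less_br:
  assumes "bip_arrows N V1 E1 V2 E2" "\<not> bip_arrows M V1 E1 V2 E2"
  shows "M < br V1 E1 V2 E2"
proof (rule ccontr)
  assume "\<not> M < br V1 E1 V2 E2"
  then have "br V1 E1 V2 E2 \<le> M" by simp
  with LeastI[of "\<lambda>N. bip_arrows N V1 E1 V2 E2", OF assms(1)]
  have "bip_arrows M V1 E1 V2 E2" unfolding br_def by (rule bip_arrows_mono)
  then show False using assms(2) by contradiction
qed

lemma obtain_crossing_edge:
  assumes "card e = 2" "card (e \<inter> X) = 1"
  obtains x y where "e = {x, y}" "x \<in> X" "y \<notin> X"
proof -
  obtain x where x: "e \<inter> X = {x}" using assms(2) by (rule card_1_singletonE)
  then have "x \<in> e" by blast
  then have "card (e - {x}) = 1" using assms(1) by simp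
  then obtain y where "e - {x} = {y}" by (rule card_1_singletonE)
  then show thesis using x by (intro that[of x y]) auto
qed

lemma obtain_two_sided_injection:
  assumes "finite V" "X \<subseteq> V" "finite A" "finite B" "card V \<le> card A" "card V \<le> card B"
  obtains f where "inj_on f V" "\<forall>x\<in>X. \<exists>a\<in>A. f x = Inl a" "\<forall>y\<in>V - X. \<exists>b\<in>B. f y = Inr b"
proof -
  have "card X \<le> card A" "card (V - X) \<le> card B"
    using assms by (meson card_mono Diff_subset order.trans)+
  moreover have "finite X" "finite (V - X)" using assms(1,2) finite_subset by auto
  ultimately obtain g1 g2 where g1: "g1 ` X \<subseteq> A" "inj_on g1 X"
    and g2: "g2 ` (V - X) \<subseteq> B" "inj_on g2 (V - X)"
    using assms(3,4) by (meson card_le_inj)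
  define f where "f v = (if v \<in> X then Inl (g1 v) else Inr (g2 v))" for v
  have "inj_on f V" using g1(2) g2(2) unfolding inj_on_def f_def by auto
  moreover have "\<forall>x\<in>X. \<exists>a\<in>A. f x = Inl a" "\<forall>y\<in>V - X. \<exists>b\<in>B. f y = Inr b"
    using g1(1) g2(1) unfolding f_def by auto
  ultimately show thesis by (rule that)
qed

lemma colour_copy_of_monochromatic_box:
  assumes bip: "bipartite_graph V E"
    and A: "A \<subseteq> {..<N}" "card V \<le> card A" and B: "B \<subseteq> {..<N}" "card V \<le> card B"
    and mono: "\<forall>a\<in>A. \<forall>b\<in>B. c a b = col"
  shows "colour_copy N c col V E"
proof -
  obtain X where X: "X \<subseteq> V" "\<forall>e\<in>E. card (e \<inter> X) = 1"
    using bip unfolding bipartite_graph_def by blast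
  have "finite V" and edges: "\<forall>e\<in>E. e \<subseteq> V \<and> card e = 2"
    using bip unfolding bipartite_graph_def sgraph_def by auto
  moreover have "finite A" "finite B" using A(1) B(1) finite_subset by auto
  ultimately obtain f where f: "inj_on f V" and
    fX: "\<forall>x\<in>X. \<exists>a\<in>A. f x = Inl a" and fY: "\<forall>y\<in>V - X. \<exists>b\<in>B. f y = Inr b"
    using obtain_two_sided_injection X(1) A(2) B(2) by metis
  have "f v \<in> KNN_verts N" if v: "v \<in> V" for v
  proof (cases "v \<in> X")
    case True
    then obtain a where "a \<in> A" "f v = Inl a" using fX by blast
    then show ?thesis using A(1) by auto
  next
    case False
    then obtain b where "b \<in> B" "f v = Inr b" using fY v by blast
    then show ?thesis using B(1) by auto
  qed
  moreover have "\<exists>i<N. \<exists>j<N. f ` e = {Inl i, Inr j} \<and> c i j = col" if "e \<in> E" for e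
  proof -
    obtain x y where xy: "e = {x, y}" "x \<in> X" "y \<notin> X"
      using obtain_crossing_edge[of e X] X(2) edges \<open>e \<in> E\<close> by blast
    then have "y \<in> V - X" using edges \<open>e \<in> E\<close> by auto
    then obtain a b where "a \<in> A" "b \<in> B" "f x = Inl a" "f y = Inr b" using fX fY xy(2) by blast
    then show ?thesis using xy(1) A(1) B(1) mono by auto
  qed
  ultimately show ?thesis using f unfolding colour_copy_def by blast
qed

lemma bip_arrows_exists:
  assumes "bipartite_graph V1 E1" "bipartite_graph V2 E2"
  shows "\<exists>N. bip_arrows N V1 E1 V2 E2"
proof (rule bipartite_ramsey_box[of "max (card V1) (card V2)"])
  fix N
  assume N: "\<And>c::nat \<Rightarrow> nat \<Rightarrow> bool. \<exists>A B. A \<subseteq> {..<N} \<and> B \<subseteq> {..<N} \<and>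
    card A = max (card V1) (card V2) \<and> card B = max (card V1) (card V2) \<and>
    ((\<forall>a\<in>A. \<forall>b\<in>B. c a b) \<or> (\<forall>a\<in>A. \<forall>b\<in>B. \<not> c a b))"
  have "colour_copy N c True V1 E1 \<or> colour_copy N c False V2 E2" for c
  proof -
    obtain A B where AB: "A \<subseteq> {..<N}" "B \<subseteq> {..<N}"
      "card V1 \<le> card A" "card V1 \<le> card B" "card V2 \<le> card A" "card V2 \<le> card B"
      and mono: "(\<forall>a\<in>A. \<forall>b\<in>B. c a b = True) \<or> (\<forall>a\<in>A. \<forall>b\<in>B. c a b = False)"
      using N[of c] by auto
    then show ?thesis
      using colour_copy_of_monochromatic_box[OF assms(1) AB(1,3,2,4)]
        colour_copy_of_monochromatic_box[OF assms(2) AB(1,5,2,6)] by blast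
  qed
  then show "\<exists>N. bip_arrows N V1 E1 V2 E2" unfolding bip_arrows_def by blast
qed

section \<open>Complete bipartite graphs and boxes\<close>

definition complete_bipartite_verts :: "nat \<Rightarrow> nat set" where
  "complete_bipartite_verts t = {..<2 * t}"

definition complete_bipartite_edges :: "nat \<Rightarrow> nat set set" where
  "complete_bipartite_edges t = {{i, t + j} | i j. i < t \<and> j < t}"

lemma complete_bipartite_edgesI: "i < t \<Longrightarrow> j < t \<Longrightarrow> {i, t + j} \<in> complete_bipartite_edges t"
  unfolding complete_bipartite_edges_def by blast

lemma bipartite_graph_complete_bipartite:
  "bipartite_graph (complete_bipartite_verts t) (complete_bipartite_edges t)"
  unfolding bipartite_graph_def sgraph_def
proof (intro conjI exI[of _ "{..<t}"] ballI)
  fix e assume "e \<in> complete_bipartite_edges t"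
  then obtain i j where "i < t" "j < t" "e = {i, t + j}"
    unfolding complete_bipartite_edges_def by blast
  moreover have "{i, t + j} \<inter> {..<t} = {i}" if "i < t" for i j using that by auto
  ultimately show "e \<subseteq> complete_bipartite_verts t" "card e = 2" "card (e \<inter> {..<t}) = 1"
    unfolding complete_bipartite_verts_def by auto
qed (auto simp: complete_bipartite_verts_def)

lemma no_isolated_complete_bipartite:
  assumes "1 \<le> t"
  shows "no_isolated (complete_bipartite_verts t) (complete_bipartite_edges t)"
  unfolding no_isolated_def
proof
  fix v assume "v \<in> complete_bipartite_verts t"
  then have v: "v < 2 * t" unfolding complete_bipartite_verts_def by simp
  show "\<exists>e\<in>complete_bipartite_edges t. v \<in> e"
  proof (cases "v < t")
    case True
    then show ?thesis using complete_bipartite_edgesI[of v t 0] assms by auto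
  next
    case False
    then have "v \<in> {0, t + (v - t)}" by simp
    then show ?thesis using complete_bipartite_edgesI[of 0 t "v - t"] assms v by auto
  qed
qed

lemma card_complete_bipartite_edges_le: "card (complete_bipartite_edges t) \<le> t * t"
proof -
  have "complete_bipartite_edges t = (\<lambda>(i, j). {i, t + j}) ` ({..<t} \<times> {..<t})"
    unfolding complete_bipartite_edges_def by auto
  then show ?thesis by (metis card_image_le card_cartesian_product card_lessThan finite_SigmaI finite_lessThan)
qed

definition boxes :: "nat \<Rightarrow> nat \<Rightarrow> (nat \<times> nat) set set" where
  "boxes M t = {S \<times> T | S T. S \<subseteq> {..<M} \<and> T \<subseteq> {..<M} \<and> card S = t \<and> card T = t}"

lemma box_subset: "B \<in> boxes M t \<Longrightarrow> B \<subseteq> {..<M} \<times> {..<M}"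
  and finite_box: "B \<in> boxes M t \<Longrightarrow> finite B"
  and card_box: "B \<in> boxes M t \<Longrightarrow> card B = t * t"
  unfolding boxes_def by (auto simp: card_cartesian_product finite_subset)

lemma finite_boxes: "finite (boxes M t)"
  and card_boxes_le: "card (boxes M t) \<le> (M choose t) ^ 2"
proof -
  define Sub where "Sub = {S. S \<subseteq> {..<M} \<and> card S = t}"
  have boxes: "boxes M t = (\<lambda>(S, T). S \<times> T) ` (Sub \<times> Sub)"
    unfolding boxes_def Sub_def by auto
  moreover have "finite Sub" "card Sub = M choose t"
    unfolding Sub_def using n_subsets[of "{..<M}" t] by simp_all
  ultimately show "finite (boxes M t)" by simp
  have "card (boxes M t) \<le> card (Sub \<times> Sub)"
    unfolding boxes by (rule card_image_le) (simp add: \<open>finite Sub\<close>)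
  also have "\<dots> = (M choose t) ^ 2"
    by (simp add: card_cartesian_product power2_eq_square \<open>card Sub = M choose t\<close>)
  finally show "card (boxes M t) \<le> (M choose t) ^ 2" .
qed

lemma box_of_cross_edges:
  assumes inj: "inj_on f (X \<union> Y)" and f: "f ` (X \<union> Y) \<subseteq> KNN_verts M"
    and X: "card X = t" "f ` X \<subseteq> range Inl" and Y: "card Y = t" "f ` Y \<subseteq> range Inr"
    and blue: "\<And>x y i j. x \<in> X \<Longrightarrow> y \<in> Y \<Longrightarrow> {f x, f y} = {Inl i, Inr j} \<Longrightarrow> \<not> c i j"
  shows "\<exists>B\<in>boxes M t. \<forall>(a, b)\<in>B. \<not> c a b"
proof -
  have "Inl ` (Inl -` f ` X) = f ` X" "Inr ` (Inr -` f ` Y) = f ` Y"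
    using X(2) Y(2) by auto
  moreover have "card (f ` X) = t" "card (f ` Y) = t"
    using inj X(1) Y(1) by (simp_all add: card_image inj_on_Un)
  ultimately have "card (Inl -` f ` X) = t" "card (Inr -` f ` Y) = t"
    by (metis card_image inj_Inl, metis card_image inj_Inr)
  moreover have "Inl -` f ` X \<subseteq> {..<M}"
  proof
    fix i assume "i \<in> Inl -` f ` X"
    then have "Inl i \<in> KNN_verts M" using f by blast
    then show "i \<in> {..<M}" by simp
  qed
  moreover have "Inr -` f ` Y \<subseteq> {..<M}"
  proof
    fix j assume "j \<in> Inr -` f ` Y"
    then have "Inr j \<in> KNN_verts M" using f by blast
    then show "j \<in> {..<M}" by simp
  qed
  moreover have "\<forall>(a, b)\<in>(Inl -` f ` X) \<times> (Inr -` f ` Y). \<not> c a b"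
  proof -
    have "\<not> c a b" if ab: "a \<in> Inl -` f ` X" "b \<in> Inr -` f ` Y" for a b
    proof -
      obtain x y where "x \<in> X" "y \<in> Y" "f x = Inl a" "f y = Inr b" using ab by auto
      then show ?thesis using blue[of x y a b] by simp
    qed
    then show ?thesis by auto
  qed
  ultimately show ?thesis unfolding boxes_def by blast
qed

lemma blue_copy_cross_edges:
  assumes "colour_copy M c False (complete_bipartite_verts t) (complete_bipartite_edges t)"
  obtains f where "inj_on f (complete_bipartite_verts t)" "f ` complete_bipartite_verts t \<subseteq> KNN_verts M"
    "\<forall>x\<in>{..<t}. \<forall>y\<in>{t..<2 * t}. \<exists>i j. {f x, f y} = {Inl i, Inr j} \<and> \<not> c i j"
proof -
  obtain f where inj: "inj_on f (complete_bipartite_verts t)"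
    and f: "f ` complete_bipartite_verts t \<subseteq> KNN_verts M"
    and edges: "\<forall>e\<in>complete_bipartite_edges t. \<exists>i<M. \<exists>j<M. f ` e = {Inl i, Inr j} \<and> c i j = False"
    using assms unfolding colour_copy_def by blast
  have "\<exists>i j. {f x, f y} = {Inl i, Inr j} \<and> \<not> c i j" if "x \<in> {..<t}" "y \<in> {t..<2 * t}" for x y
  proof -
    have "{x, t + (y - t)} \<in> complete_bipartite_edges t"
      using that by (intro complete_bipartite_edgesI) auto
    then show ?thesis using edges that by auto
  qed
  with inj f show thesis by (intro that) auto
qed

lemma box_of_blue_copy:
  assumes "colour_copy M c False (complete_bipartite_verts t) (complete_bipartite_edges t)" "1 \<le> t"
  shows "\<exists>B\<in>boxes M t. \<forall>(a, b)\<in>B. \<not> c a b"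
proof -
  define X where "X = {..<t}"
  define Y where "Y = {t..<2 * t}"
  have XY: "X \<union> Y = complete_bipartite_verts t" "Y \<union> X = complete_bipartite_verts t"
    unfolding X_def Y_def complete_bipartite_verts_def by auto
  have "card X = t" "card Y = t" "0 \<in> X" "t \<in> Y" using assms(2) unfolding X_def Y_def by auto
  obtain f where inj: "inj_on f (complete_bipartite_verts t)"
    and f: "f ` complete_bipartite_verts t \<subseteq> KNN_verts M"
    and cross_edges: "\<forall>x\<in>X. \<forall>y\<in>Y. \<exists>i j. {f x, f y} = {Inl i, Inr j} \<and> \<not> c i j"
    unfolding X_def Y_def by (rule blue_copy_cross_edges[OF assms(1)])
  have cross: "\<exists>i j. {f x, f y} = {Inl i, Inr j} \<and> \<not> c i j" if "x \<in> X" "y \<in> Y" for x y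
    using cross_edges that by blast
  have blue: "\<not> c i j" if "x \<in> X" "y \<in> Y" "{f x, f y} = {Inl i, Inr j}" for x y i j
    using cross[OF that(1,2)] that(3) by auto
  have sides: "f x \<in> range Inl \<longleftrightarrow> f y \<in> range Inr" if "x \<in> X" "y \<in> Y" for x y
    using cross[OF that] by (auto simp: doubleton_eq_iff)
  have X_side: "f x \<in> range Inl \<longleftrightarrow> f 0 \<in> range Inl" if "x \<in> X" for x
    using sides[OF that \<open>t \<in> Y\<close>] sides[OF \<open>0 \<in> X\<close> \<open>t \<in> Y\<close>] by simp
  have Y_side: "f y \<in> range Inr \<longleftrightarrow> f 0 \<in> range Inl" if "y \<in> Y" for y
    using sides[OF \<open>0 \<in> X\<close> that] by simp
  have Inl_or_Inr: "z \<in> range Inr \<longleftrightarrow> z \<notin> range Inl" for z :: "nat + nat"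
    by (cases z) auto
  show ?thesis
  proof (cases "f 0 \<in> range Inl")
    case True
    then have "f ` X \<subseteq> range Inl" "f ` Y \<subseteq> range Inr" using X_side Y_side by auto
    then show ?thesis
      using inj f unfolding XY(1)[symmetric]
      by (intro box_of_cross_edges[OF _ _ \<open>card X = t\<close> _ \<open>card Y = t\<close> _ blue])
  next
    case False
    then have "f ` Y \<subseteq> range Inl" "f ` X \<subseteq> range Inr"
      using X_side Y_side Inl_or_Inr by auto
    moreover have blue': "\<not> c i j" if "y \<in> Y" "x \<in> X" "{f y, f x} = {Inl i, Inr j}" for x y i j
      using blue[of x y i j] that by (simp add: insert_commute)
    ultimately show ?thesis
      using inj f unfolding XY(2)[symmetric]
      by (intro box_of_cross_edges[OF _ _ \<open>card Y = t\<close> _ \<open>card X = t\<close> _ blue'])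
  qed
qed

section \<open>Copies of a graph in \<open>K\<^sub>M\<^sub>,\<^sub>M\<close>\<close>

locale simple_graph =
  fixes V :: "'a set" and E :: "'a set set"
  assumes sgraph: "sgraph V E"
begin

lemma finite_V: "finite V"
  and edge_subset: "e \<in> E \<Longrightarrow> e \<subseteq> V"
  and card_edge: "e \<in> E \<Longrightarrow> card e = 2"
  using sgraph unfolding sgraph_def by auto

lemma finite_E: "finite E"
  by (rule finite_subset[of E "Pow V"]) (use finite_V edge_subset in auto)

definition bip_embedding :: "nat \<Rightarrow> ('a \<Rightarrow> nat + nat) \<Rightarrow> bool" where
  "bip_embedding M f \<longleftrightarrow>
     inj_on f V \<and> f ` V \<subseteq> KNN_verts M \<and> (\<forall>e\<in>E. \<exists>i j. f ` e = {Inl i, Inr j})"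

definition copy_edges :: "('a \<Rightarrow> nat + nat) \<Rightarrow> (nat \<times> nat) set" where
  "copy_edges f = {(i, j). \<exists>e\<in>E. f ` e = {Inl i, Inr j}}"

text \<open>A copy of the graph in \<open>K\<^sub>M\<^sub>,\<^sub>M\<close> is recorded by its edge set, a subset of the grid
  \<open>{..<M} \<times> {..<M}\<close> in which \<open>(i, j)\<close> stands for the edge \<open>{Inl i, Inr j}\<close>.\<close>
definition copies :: "nat \<Rightarrow> (nat \<times> nat) set set" where
  "copies M = copy_edges ` {f. bip_embedding M f}"

lemma copy_edges_subset:
  assumes "bip_embedding M f"
  shows "copy_edges f \<subseteq> {..<M} \<times> {..<M}"
proof
  fix x assume "x \<in> copy_edges f"
  then obtain i j e where "x = (i, j)" "e \<in> E" "f ` e = {Inl i, Inr j}"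
    unfolding copy_edges_def by auto
  moreover have "f ` e \<subseteq> KNN_verts M"
    using assms edge_subset[OF \<open>e \<in> E\<close>] unfolding bip_embedding_def by auto
  ultimately show "x \<in> {..<M} \<times> {..<M}" by auto
qed

lemma copies_subset: "X \<in> copies M \<Longrightarrow> X \<subseteq> {..<M} \<times> {..<M}"
  unfolding copies_def using copy_edges_subset by auto

lemma finite_copy: "X \<in> copies M \<Longrightarrow> finite X"
  using copies_subset finite_subset by blast

lemma finite_copies: "finite (copies M)"
  by (rule finite_subset[of _ "Pow ({..<M} \<times> {..<M})"]) (use copies_subset in auto)

lemma card_copy_edges:
  assumes "bip_embedding M f"
  shows "card (copy_edges f) = card E"
proof -
  have "(\<lambda>(i, j). {Inl i, Inr j}) ` copy_edges f = (`) f ` E"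
  proof
    show "(\<lambda>(i, j). {Inl i, Inr j}) ` copy_edges f \<subseteq> (`) f ` E"
      unfolding copy_edges_def by auto
    show "(`) f ` E \<subseteq> (\<lambda>(i, j). {Inl i, Inr j}) ` copy_edges f"
    proof
      fix S assume "S \<in> (`) f ` E"
      then obtain e where "e \<in> E" "S = f ` e" by blast
      moreover obtain i j where "f ` e = {Inl i, Inr j}"
        using assms \<open>e \<in> E\<close> unfolding bip_embedding_def by blast
      ultimately have "(i, j) \<in> copy_edges f" "S = {Inl i, Inr j}" unfolding copy_edges_def by auto
      then show "S \<in> (\<lambda>(i, j). {Inl i, Inr j}) ` copy_edges f" by force
    qed
  qed
  moreover have "inj_on (\<lambda>(i, j). {Inl i, Inr j} :: (nat + nat) set) (copy_edges f)"
    by (auto simp: inj_on_def)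
  moreover have "inj_on f (\<Union>E)"
    using assms edge_subset unfolding bip_embedding_def by (meson Sup_least inj_on_subset)
  then have "card ((`) f ` E) = card E" by (simp add: card_image inj_on_image)
  ultimately show ?thesis by (metis card_image)
qed

lemma card_copies: "X \<in> copies M \<Longrightarrow> card X = card E"
  unfolding copies_def using card_copy_edges by auto

lemma copy_of_colour_copy:
  assumes "colour_copy M c col V E"
  shows "\<exists>X\<in>copies M. \<forall>(i, j)\<in>X. c i j = col"
proof -
  obtain f where f: "inj_on f V" "f ` V \<subseteq> KNN_verts M"
    "\<forall>e\<in>E. \<exists>i<M. \<exists>j<M. f ` e = {Inl i, Inr j} \<and> c i j = col"
    using assms unfolding colour_copy_def by blast
  then have "bip_embedding M f" unfolding bip_embedding_def by blast
  moreover have "\<forall>(i, j)\<in>copy_edges f. c i j = col"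
    using f(3) unfolding copy_edges_def by fastforce
  ultimately show ?thesis unfolding copies_def by blast
qed

lemma copy_edges_cong:
  assumes "\<And>v. v \<in> V \<Longrightarrow> f v = g v"
  shows "copy_edges f = copy_edges g"
proof -
  have "f ` e = g ` e" if "e \<in> E" for e
    using assms edge_subset[OF that] by (intro image_cong) auto
  then show ?thesis unfolding copy_edges_def by auto
qed

definition anchored_maps :: "nat \<Rightarrow> 'a set \<Rightarrow> nat \<times> nat \<Rightarrow> ('a \<Rightarrow> nat + nat) set" where
  "anchored_maps M e p = PiE V (\<lambda>w. if w \<in> e then {Inl (fst p), Inr (snd p)} else KNN_verts M)"

lemma finite_anchored_maps: "finite (anchored_maps M e p)"
  unfolding anchored_maps_def KNN_verts_def using finite_V by (simp add: finite_PiE)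

lemma card_anchored_maps:
  assumes "e \<in> E"
  shows "card (anchored_maps M e p) = 4 * (2 * M) ^ (card V - 2)"
proof -
  define F where "F w = (if w \<in> e then {Inl (fst p), Inr (snd p)} else KNN_verts M)" for w
  have card_KNN: "card (KNN_verts M) = 2 * M"
    unfolding KNN_verts_def by (subst card_Un_disjoint) (auto simp: card_image)
  have "card (anchored_maps M e p) = (\<Prod>w\<in>V. card (F w))"
    unfolding anchored_maps_def F_def by (rule card_PiE[OF finite_V])
  also have "\<dots> = (\<Prod>w\<in>V - e. card (F w)) * (\<Prod>w\<in>e. card (F w))"
    by (rule prod.subset_diff[OF edge_subset[OF assms] finite_V])
  also have "\<dots> = (\<Prod>w\<in>V - e. 2 * M) * (\<Prod>w\<in>e. 2)"
    unfolding F_def by (intro arg_cong2[where f = "(*)"] prod.cong) (auto simp: card_KNN)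
  also have "\<dots> = 4 * (2 * M) ^ (card V - 2)"
    using edge_subset[OF assms] card_edge[OF assms] finite_V
    by (simp add: card_Diff_subset finite_subset)
  finally show ?thesis .
qed

lemma copies_meeting_subset:
  "{X\<in>copies M. X \<inter> B \<noteq> {}} \<subseteq> (\<Union>p\<in>B. \<Union>e\<in>E. copy_edges ` anchored_maps M e p)"
proof
  fix X assume "X \<in> {X\<in>copies M. X \<inter> B \<noteq> {}}"
  then obtain f i j e where f: "bip_embedding M f" "X = copy_edges f" "(i, j) \<in> B"
    and e: "e \<in> E" "f ` e = {Inl i, Inr j}"
    unfolding copies_def copy_edges_def by blast
  have "f w \<in> (if w \<in> e then {Inl i, Inr j} else KNN_verts M)" if "w \<in> V" for w
  proof (cases "w \<in> e")
    case True
    then show ?thesis using e(2) by (metis imageI)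
  next
    case False
    then show ?thesis using f(1) that unfolding bip_embedding_def by auto
  qed
  then have "restrict f V \<in> anchored_maps M e (i, j)"
    unfolding anchored_maps_def fst_conv snd_conv restrict_PiE_iff by blast
  moreover have "copy_edges (restrict f V) = X" unfolding f(2) by (rule copy_edges_cong) simp
  ultimately show "X \<in> (\<Union>p\<in>B. \<Union>e\<in>E. copy_edges ` anchored_maps M e p)"
    using f(3) e(1) by blast
qed

lemma card_copies_meeting_le:
  assumes "finite B"
  shows "card {X\<in>copies M. X \<inter> B \<noteq> {}} \<le> card B * card E * (4 * (2 * M) ^ (card V - 2))"
proof -
  have "card {X\<in>copies M. X \<inter> B \<noteq> {}} \<le> card (\<Union>p\<in>B. \<Union>e\<in>E. copy_edges ` anchored_maps M e p)"
    using assms finite_E finite_anchored_maps by (intro card_mono copies_meeting_subset) auto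
  also have "\<dots> \<le> (\<Sum>p\<in>B. card (\<Union>e\<in>E. copy_edges ` anchored_maps M e p))"
    by (rule card_UN_le[OF assms])
  also have "\<dots> \<le> (\<Sum>p\<in>B. \<Sum>e\<in>E. card (anchored_maps M e p))"
    by (intro sum_mono order.trans[OF card_UN_le[OF finite_E]] card_image_le finite_anchored_maps)
  also have "\<dots> = card B * card E * (4 * (2 * M) ^ (card V - 2))"
    by (simp add: card_anchored_maps)
  finally show ?thesis .
qed

end

section \<open>The random colouring\<close>

definition random_colouring :: "nat \<Rightarrow> real \<Rightarrow> (nat \<times> nat \<Rightarrow> bool) pmf" where
  "random_colouring M \<rho> = Pi_pmf ({..<M} \<times> {..<M}) False (\<lambda>_. bernoulli_pmf \<rho>)"

lemma prob_monochromatic: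
  assumes "S \<subseteq> {..<M} \<times> {..<M}" "0 \<le> \<rho>" "\<rho> \<le> 1"
  shows "measure_pmf.prob (random_colouring M \<rho>) {col. \<forall>e\<in>S. col e = b}
    = (if b then \<rho> else 1 - \<rho>) ^ card S"
proof -
  define I where "I = {..<M} \<times> {..<M}"
  have "{col. \<forall>e\<in>S. col e = b} = Pi I (\<lambda>e. if e \<in> S then {b} else UNIV)"
    using assms(1) unfolding I_def by (auto simp: Pi_def)
  then have "measure_pmf.prob (random_colouring M \<rho>) {col. \<forall>e\<in>S. col e = b} =
      (\<Prod>e\<in>I. measure_pmf.prob (bernoulli_pmf \<rho>) (if e \<in> S then {b} else UNIV))"
    unfolding random_colouring_def I_def by (simp add: measure_Pi_pmf_Pi)
  also have "\<dots> = (\<Prod>e\<in>I. if e \<in> S then (if b then \<rho> else 1 - \<rho>) else 1)"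
    by (rule prod.cong) (use assms(2,3) in \<open>auto simp: measure_pmf_single\<close>)
  also have "\<dots> = (if b then \<rho> else 1 - \<rho>) ^ card S"
    using assms(1) unfolding I_def by (simp add: prod.If_cases Int_absorb1)
  finally show ?thesis .
qed

lemma prob_le_card_mult_of_cover:
  fixes x :: real
  assumes "finite I" "A \<subseteq> (\<Union>i\<in>I. C i)" "\<And>i. i \<in> I \<Longrightarrow> measure_pmf.prob p (C i) \<le> x"
  shows "measure_pmf.prob p A \<le> card I * x"
proof -
  have "measure_pmf.prob p A \<le> measure_pmf.prob p (\<Union>i\<in>I. C i)"
    by (rule measure_pmf.finite_measure_mono[OF assms(2)]) simp
  also have "\<dots> \<le> (\<Sum>i\<in>I. measure_pmf.prob p (C i))"
    by (rule measure_pmf.finite_measure_subadditive_finite[OF assms(1)]) simp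
  also have "\<dots> \<le> (\<Sum>i\<in>I. x)" by (rule sum_mono) (rule assms(3))
  finally show ?thesis by simp
qed

lemma prob_few_red_edges:
  fixes \<rho> :: real
  assumes B: "B \<subseteq> {..<M} \<times> {..<M}" "card B = n" "r \<le> n" and \<rho>: "0 \<le> \<rho>" "\<rho> \<le> 1"
  shows "measure_pmf.prob (random_colouring M \<rho>) {col. card {e\<in>B. col e} < r}
    \<le> (n choose r) * (1 - \<rho>) ^ (n - r)"
proof -
  have "finite B" using B(1) finite_subset by blast
  define W where "W = {U. U \<subseteq> B \<and> card U = n - r}"
  have "finite W" unfolding W_def using \<open>finite B\<close> by simp
  have "card W = n choose r"
    unfolding W_def using n_subsets[OF \<open>finite B\<close>, of "n - r"] B(2,3)
    by (simp add: binomial_symmetric[symmetric])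
  have "{col. card {e\<in>B. col e} < r} \<subseteq> (\<Union>U\<in>W. {col. \<forall>e\<in>U. col e = False})"
  proof
    fix col assume "col \<in> {col. card {e\<in>B. col e} < r}"
    moreover have "card {e\<in>B. \<not> col e} = n - card {e\<in>B. col e}"
    proof -
      have "{e\<in>B. \<not> col e} = B - {e\<in>B. col e}" by blast
      then show ?thesis using B(2) \<open>finite B\<close> by (simp add: card_Diff_subset)
    qed
    ultimately have "n - r \<le> card {e\<in>B. \<not> col e}" by simp
    then obtain U where "U \<subseteq> {e\<in>B. \<not> col e}" "card U = n - r"
      by (rule obtain_subset_with_card_n)
    then show "col \<in> (\<Union>U\<in>W. {col. \<forall>e\<in>U. col e = False})" unfolding W_def by auto
  qed
  then have "measure_pmf.prob (random_colouring M \<rho>) {col. card {e\<in>B. col e} < r}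
      \<le> card W * (1 - \<rho>) ^ (n - r)"
  proof (rule prob_le_card_mult_of_cover[OF \<open>finite W\<close>])
    fix U assume "U \<in> W"
    then have "U \<subseteq> {..<M} \<times> {..<M}" "card U = n - r" using B(1) unfolding W_def by auto
    then show "measure_pmf.prob (random_colouring M \<rho>) {col. \<forall>e\<in>U. col e = False} \<le> (1 - \<rho>) ^ (n - r)"
      using prob_monochromatic[of U M \<rho> False] \<rho> by simp
  qed
  then show ?thesis using \<open>card W = n choose r\<close> by simp
qed

context simple_graph
begin

definition disjoint_red_copies :: "nat \<Rightarrow> (nat \<times> nat \<Rightarrow> bool) \<Rightarrow> (nat \<times> nat) set \<Rightarrow> nat \<Rightarrow> bool"
  where "disjoint_red_copies M col B s \<longleftrightarrow>
    (\<exists>F \<subseteq> {X\<in>copies M. X \<inter> B \<noteq> {}}. card F = s \<and> disjoint F \<and> (\<forall>X\<in>F. \<forall>e\<in>X. col e))"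

lemma prob_disjoint_red_copies:
  fixes \<rho> :: real
  assumes "0 \<le> \<rho>" "\<rho> \<le> 1"
  shows "measure_pmf.prob (random_colouring M \<rho>) {col. disjoint_red_copies M col B s}
    \<le> real (card {X\<in>copies M. X \<inter> B \<noteq> {}}) ^ s / fact s * \<rho> ^ (card E * s)"
proof -
  define C where "C = {X\<in>copies M. X \<inter> B \<noteq> {}}"
  define P where "P = {F. F \<subseteq> C \<and> card F = s \<and> disjoint F}"
  have "finite C" unfolding C_def using finite_copies by simp
  then have "finite P" unfolding P_def by simp
  have "card P \<le> card {F. F \<subseteq> C \<and> card F = s}"
    using \<open>finite C\<close> unfolding P_def by (intro card_mono) auto
  then have card_P: "real (card P) \<le> real (card C) ^ s / fact s"
    using real_card_subsets_le[OF \<open>finite C\<close>, of s] by linarith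
  have "{col. disjoint_red_copies M col B s} \<subseteq> (\<Union>F\<in>P. {col. \<forall>e\<in>\<Union>F. col e = True})"
    unfolding disjoint_red_copies_def P_def C_def by blast
  then have "measure_pmf.prob (random_colouring M \<rho>) {col. disjoint_red_copies M col B s}
      \<le> card P * \<rho> ^ (card E * s)"
  proof (rule prob_le_card_mult_of_cover[OF \<open>finite P\<close>])
    fix F assume "F \<in> P"
    then have F: "F \<subseteq> copies M" "card F = s" "disjoint F" unfolding P_def C_def by auto
    then have "\<Union>F \<subseteq> {..<M} \<times> {..<M}" using copies_subset by blast
    moreover have "card (\<Union>F) = card E * s"
    proof -
      have "card (\<Union>F) = (\<Sum>X\<in>F. card X)"
        using F(1) finite_copy by (intro card_Union_disjoint[OF F(3)]) auto
      also have "\<dots> = (\<Sum>X\<in>F. card E)" using F(1) card_copies by (intro sum.cong) auto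
      finally show ?thesis using F(2) by simp
    qed
    ultimately show "measure_pmf.prob (random_colouring M \<rho>) {col. \<forall>e\<in>\<Union>F. col e = True}
        \<le> \<rho> ^ (card E * s)"
      using prob_monochromatic[of "\<Union>F" M \<rho> True] assms by simp
  qed
  also have "\<dots> \<le> real (card C) ^ s / fact s * \<rho> ^ (card E * s)"
    using card_P assms by (intro mult_right_mono) simp_all
  finally show ?thesis unfolding C_def .
qed

definition good_colouring :: "nat \<Rightarrow> nat \<Rightarrow> nat \<Rightarrow> (nat \<times> nat \<Rightarrow> bool) \<Rightarrow> bool" where
  "good_colouring M t s col \<longleftrightarrow>
    (\<forall>B\<in>boxes M t. card E * s \<le> card {e\<in>B. col e} \<and> \<not> disjoint_red_copies M col B s)"

lemma prob_bad_box_le: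
  fixes \<rho> :: real
  assumes \<rho>: "0 \<le> \<rho>" "\<rho> \<le> 1" and s: "card E * s \<le> t * t" and box: "B \<in> boxes M t"
  shows "measure_pmf.prob (random_colouring M \<rho>)
      ({col. card {e\<in>B. col e} < card E * s} \<union> {col. disjoint_red_copies M col B s})
    \<le> real (t * t choose (card E * s)) * (1 - \<rho>) ^ (t * t - card E * s)
      + real (t * t * card E * (4 * (2 * M) ^ (card V - 2))) ^ s / fact s * \<rho> ^ (card E * s)"
proof -
  let ?p = "random_colouring M \<rho>"
  have B: "B \<subseteq> {..<M} \<times> {..<M}" "card B = t * t" "finite B"
    using box box_subset card_box finite_box by auto
  then have "real (card {X\<in>copies M. X \<inter> B \<noteq> {}}) \<le> real (t * t * card E * (4 * (2 * M) ^ (card V - 2)))"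
    using card_copies_meeting_le[OF \<open>finite B\<close>, of M] by (simp only: of_nat_le_iff)
  then have "real (card {X\<in>copies M. X \<inter> B \<noteq> {}}) ^ s / fact s * \<rho> ^ (card E * s)
      \<le> real (t * t * card E * (4 * (2 * M) ^ (card V - 2))) ^ s / fact s * \<rho> ^ (card E * s)"
    using \<rho> by (intro mult_right_mono divide_right_mono power_mono) simp_all
  then have "measure_pmf.prob ?p {col. disjoint_red_copies M col B s}
      \<le> real (t * t * card E * (4 * (2 * M) ^ (card V - 2))) ^ s / fact s * \<rho> ^ (card E * s)"
    using prob_disjoint_red_copies[OF \<rho>, of M B s] by linarith
  moreover have "measure_pmf.prob ?p {col. card {e\<in>B. col e} < card E * s}
      \<le> real (t * t choose (card E * s)) * (1 - \<rho>) ^ (t * t - card E * s)"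
    using prob_few_red_edges[OF B(1,2) s \<rho>] .
  moreover have "measure_pmf.prob ?p ({col. card {e\<in>B. col e} < card E * s} \<union> {col. disjoint_red_copies M col B s})
      \<le> measure_pmf.prob ?p {col. card {e\<in>B. col e} < card E * s}
        + measure_pmf.prob ?p {col. disjoint_red_copies M col B s}"
    by (rule measure_Un_le) simp_all
  ultimately show ?thesis by linarith
qed

lemma exists_good_colouring:
  fixes \<rho> :: real
  assumes \<rho>: "0 \<le> \<rho>" "\<rho> \<le> 1" and s: "card E * s \<le> t * t"
    and bound: "real ((M choose t) ^ 2) *
      (real (t * t choose (card E * s)) * (1 - \<rho>) ^ (t * t - card E * s)
       + real (t * t * card E * (4 * (2 * M) ^ (card V - 2))) ^ s / fact s * \<rho> ^ (card E * s)) < 1"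
  shows "\<exists>col. good_colouring M t s col"
proof -
  define x where "x = real (t * t choose (card E * s)) * (1 - \<rho>) ^ (t * t - card E * s)
      + real (t * t * card E * (4 * (2 * M) ^ (card V - 2))) ^ s / fact s * \<rho> ^ (card E * s)"
  define bad where "bad B = {col. card {e\<in>B. col e} < card E * s} \<union> {col. disjoint_red_copies M col B s}"
    for B
  have bad_le: "measure_pmf.prob (random_colouring M \<rho>) (bad B) \<le> x" if "B \<in> boxes M t" for B
    unfolding bad_def x_def by (rule prob_bad_box_le[OF \<rho> s that])
  have "measure_pmf.prob (random_colouring M \<rho>) (\<Union>B\<in>boxes M t. bad B) \<le> card (boxes M t) * x"
    by (rule prob_le_card_mult_of_cover[OF finite_boxes subset_refl bad_le])
  also have "\<dots> \<le> real ((M choose t) ^ 2) * x"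
    unfolding x_def using card_boxes_le \<rho> by (intro mult_right_mono) simp_all
  also have "\<dots> < 1" using bound unfolding x_def .
  finally have "(\<Union>B\<in>boxes M t. bad B) \<noteq> UNIV" by auto
  then obtain col where "col \<notin> bad B" if "B \<in> boxes M t" for B by blast
  then have "good_colouring M t s col" unfolding good_colouring_def bad_def by (force simp: not_less)
  then show ?thesis by blast
qed

end

section \<open>Deleting disjoint red copies\<close>

lemma obtain_maximal_disjoint_subfamily:
  assumes "finite R"
  obtains F where "F \<subseteq> R" "disjoint F" "\<forall>X\<in>R. X \<noteq> {} \<longrightarrow> (\<exists>Y\<in>F. X \<inter> Y \<noteq> {})"
proof -
  have "\<exists>F. (F \<subseteq> R \<and> disjoint F) \<and> (\<forall>G. G \<subseteq> R \<and> disjoint G \<longrightarrow> card G \<le> card F)"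
    using assms card_mono[OF assms]
    by (intro ex_has_greatest_nat[of _ "{}" _ "Suc (card R)"]) (auto simp: le_imp_less_Suc)
  then obtain F where F: "F \<subseteq> R" "disjoint F"
    and max: "\<And>G. G \<subseteq> R \<Longrightarrow> disjoint G \<Longrightarrow> card G \<le> card F" by blast
  have "\<exists>Y\<in>F. X \<inter> Y \<noteq> {}" if "X \<in> R" "X \<noteq> {}" for X
  proof (rule ccontr)
    assume "\<not> (\<exists>Y\<in>F. X \<inter> Y \<noteq> {})"
    then have "X \<notin> F" "disjoint (insert X F)"
      using that(2) F(2) by (auto simp: pairwise_insert disjnt_def)
    moreover have "finite F" using F(1) assms finite_subset by blast
    ultimately show False using max[of "insert X F"] F(1) that(1) by simp
  qed
  then show thesis using F by (intro that) auto
qed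

context simple_graph
begin

lemma card_covered_le:
  assumes "F \<subseteq> copies M"
  shows "card (B \<inter> \<Union>F) \<le> card F * card E"
proof -
  have "finite F" using assms finite_copies finite_subset by blast
  have "finite (\<Union>F)" using \<open>finite F\<close> assms finite_copy by (intro finite_Union) auto
  then have "card (B \<inter> \<Union>F) \<le> card (\<Union>F)" by (rule card_mono) blast
  also have "\<dots> \<le> (\<Sum>X\<in>F. card X)" by (rule card_Union_le_sum_card)
  also have "\<dots> = (\<Sum>X\<in>F. card E)" using assms card_copies by (intro sum.cong) auto
  finally show ?thesis by simp
qed

lemma red_edge_outside_disjoint_red_copies:
  assumes "E \<noteq> {}" and good: "good_colouring M t s col" and box: "B \<in> boxes M t"
    and F: "F \<subseteq> copies M" "disjoint F" "\<forall>X\<in>F. \<forall>e\<in>X. col e"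
  shows "\<exists>e\<in>B. col e \<and> e \<notin> \<Union>F"
proof (rule ccontr)
  define FB where "FB = {X\<in>F. X \<inter> B \<noteq> {}}"
  assume "\<not> (\<exists>e\<in>B. col e \<and> e \<notin> \<Union>F)"
  then have "{e\<in>B. col e} \<subseteq> B \<inter> \<Union>FB" unfolding FB_def by blast
  then have "card {e\<in>B. col e} \<le> card (B \<inter> \<Union>FB)"
    using finite_box[OF box] by (simp add: card_mono)
  moreover have "card E * s \<le> card {e\<in>B. col e}"
    using good box unfolding good_colouring_def by blast
  moreover have "card (B \<inter> \<Union>FB) \<le> card FB * card E"
    using F(1) unfolding FB_def by (intro card_covered_le) auto
  ultimately have "card E * s \<le> card E * card FB"
    by (simp only: mult.commute[of _ "card E"])
  then have "s \<le> card FB"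
    by (rule mult_left_le_imp_le) (use assms(1) finite_E in \<open>simp add: card_gt_0_iff\<close>)
  then obtain F' where F': "F' \<subseteq> FB" "card F' = s" by (rule obtain_subset_with_card_n)
  moreover have "disjoint F'" using F'(1) unfolding FB_def by (intro pairwise_subset[OF F(2)]) auto
  moreover have "F' \<subseteq> {X\<in>copies M. X \<inter> B \<noteq> {}}" "\<forall>X\<in>F'. \<forall>e\<in>X. col e"
    using F'(1) F(1,3) unfolding FB_def by auto
  ultimately have "disjoint_red_copies M col B s" unfolding disjoint_red_copies_def by blast
  then show False using good box unfolding good_colouring_def by blast
qed

lemma recolouring_without_red_copy:
  assumes "E \<noteq> {}" and good: "good_colouring M t s col"
  shows "\<exists>c. \<not> colour_copy M c True V E \<and> (\<forall>B\<in>boxes M t. \<exists>(a, b)\<in>B. c a b)"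
proof -
  define R where "R = {X\<in>copies M. \<forall>e\<in>X. col e}"
  have "finite R" unfolding R_def using finite_copies by simp
  then obtain F where F: "F \<subseteq> R" "disjoint F"
    and meets: "\<forall>X\<in>R. X \<noteq> {} \<longrightarrow> (\<exists>Y\<in>F. X \<inter> Y \<noteq> {})"
    by (rule obtain_maximal_disjoint_subfamily)
  define c where "c a b \<longleftrightarrow> col (a, b) \<and> (a, b) \<notin> \<Union>F" for a b
  have "\<not> colour_copy M c True V E"
  proof
    assume "colour_copy M c True V E"
    then obtain X where X: "X \<in> copies M" "\<forall>(i, j)\<in>X. c i j = True"
      using copy_of_colour_copy by blast
    then have "X \<in> R" "X \<inter> \<Union>F = {}" unfolding R_def c_def by auto
    moreover have "X \<noteq> {}" using card_copies[OF X(1)] assms(1) finite_E by auto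
    ultimately show False using meets by blast
  qed
  moreover have "\<exists>(a, b)\<in>B. c a b" if "B \<in> boxes M t" for B
    using red_edge_outside_disjoint_red_copies[OF assms that] F unfolding R_def c_def by auto
  ultimately show ?thesis by blast
qed

lemma not_arrows_complete_bipartite:
  assumes "E \<noteq> {}" "1 \<le> t" "good_colouring M t s col"
  shows "\<not> bip_arrows M V E (complete_bipartite_verts t) (complete_bipartite_edges t)"
proof
  assume arrows: "bip_arrows M V E (complete_bipartite_verts t) (complete_bipartite_edges t)"
  obtain c where "\<not> colour_copy M c True V E" and red_edge: "\<forall>B\<in>boxes M t. \<exists>(a, b)\<in>B. c a b"
    using recolouring_without_red_copy[OF assms(1,3)] by blast
  then have "colour_copy M c False (complete_bipartite_verts t) (complete_bipartite_edges t)"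
    using arrows unfolding bip_arrows_def by blast
  then obtain B where "B \<in> boxes M t" "\<forall>(a, b)\<in>B. \<not> c a b"
    using box_of_blue_copy assms(2) by blast
  then show False using red_edge by blast
qed

end

section \<open>Choice of parameters\<close>

text \<open>\<open>P\<close> is the number of vertices of the graph outside a fixed edge, \<open>q\<close> its number of edges.\<close>
locale parameter_exponents =
  fixes P q :: nat
  assumes q_ge: "2 * P + 2 \<le> q"
begin

definition D :: nat where "D = 3 * P + 4"
definition L :: nat where "L = 4 * D + 3"

lemma D_ge: "2 \<le> D" unfolding D_def by simp

end

locale parameter_choice = parameter_exponents +
  fixes k :: nat
  assumes k_ge: "2 \<le> k"
begin

definition t :: nat where "t = k ^ D"
definition M :: nat where "M = k ^ (2 * D + 1)"
definition s :: nat where "s = L * k ^ D"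
definition \<rho> :: real where "\<rho> = 1 / real (k ^ (D - 1))"

lemma \<rho>_nonneg: "0 \<le> \<rho>" and \<rho>_le_1: "\<rho> \<le> 1"
  unfolding \<rho>_def using k_ge by simp_all

lemma one_le_t: "1 \<le> t" and one_le_s: "1 \<le> s"
  unfolding t_def s_def L_def using k_ge by simp_all

lemma M_eq: "M = k * (t * t)"
  unfolding M_def t_def by (simp add: mult_2 power_add)

lemma card_boxes_bound: "(M choose t) ^ 2 \<le> (k ^ (4 * D + 2)) ^ k ^ D"
proof -
  have exponent: "(2 * D + 1) * (2 * k ^ D) = (4 * D + 2) * k ^ D" by simp
  have "t \<le> M" unfolding t_def M_def using k_ge by (intro power_increasing) auto
  then have "(M choose t) ^ 2 \<le> M ^ (2 * t)" by (rule binomial_square_le)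
  also have "\<dots> = (k ^ (4 * D + 2)) ^ k ^ D"
    unfolding M_def t_def by (simp only: power_mult[symmetric] exponent)
  finally show ?thesis .
qed

lemma red_edges_needed:
  assumes "q * L \<le> k"
  shows "q * s \<le> t * t" and "k ^ (D - 1) * (k ^ D * (k - 1)) \<le> t * t - q * s"
proof -
  have "2 * D = Suc (2 * D - 1)" "D - 1 + D = 2 * D - 1" using D_ge by simp_all
  have tt: "t * t = k ^ (2 * D - 1) * k"
    unfolding t_def by (metis \<open>2 * D = _\<close> mult_2 power_Suc2 power_add)
  have "q * s \<le> k ^ (D + 1)" unfolding s_def using assms by (simp add: mult.assoc[symmetric])
  also have "\<dots> \<le> k ^ (2 * D - 1)" using k_ge D_ge by (intro power_increasing) auto
  finally have qs: "q * s \<le> k ^ (2 * D - 1)" .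
  moreover have "k ^ (2 * D - 1) \<le> k ^ (2 * D - 1) * k" using k_ge by simp
  ultimately show "q * s \<le> t * t" unfolding tt by linarith
  have "k ^ (D - 1) * (k ^ D * (k - 1)) = k ^ (2 * D - 1) * (k - 1)"
    by (metis \<open>D - 1 + D = _\<close> mult.assoc power_add)
  also have "\<dots> \<le> t * t - q * s" using tt qs by (simp add: diff_mult_distrib2)
  finally show "k ^ (D - 1) * (k ^ D * (k - 1)) \<le> t * t - q * s" .
qed

lemma few_red_edges_term_le:
  assumes qL: "q * L \<le> k" and big: "8 * k ^ (4 * D + 2 + 2 * D * q * L) \<le> 2 ^ k"
  shows "real ((M choose t) ^ 2 * (t * t choose (q * s))) * (1 - \<rho>) ^ (t * t - q * s) \<le> 1 / 4"
proof -
  define c where "c = 4 * D + 2 + 2 * D * q * L"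
  have "(1 - \<rho>) ^ (t * t - q * s) \<le> ((1 - \<rho>) ^ k ^ (D - 1)) ^ (k ^ D * (k - 1))"
    using power_decreasing[OF red_edges_needed(2)[OF qL], of "1 - \<rho>"] \<rho>_nonneg \<rho>_le_1
    by (simp add: power_mult)
  also have "\<dots> \<le> (1 / 2) ^ (k ^ D * (k - 1))"
    using one_minus_inverse_power_le_half[of "k ^ (D - 1)"] k_ge \<rho>_le_1
    unfolding \<rho>_def by (intro power_mono) simp_all
  also have "\<dots> = ((1 / 2) ^ (k - 1)) ^ k ^ D" by (simp only: mult.commute[of "k ^ D"] power_mult)
  finally have red: "(1 - \<rho>) ^ (t * t - q * s) \<le> ((1 / 2) ^ (k - 1)) ^ k ^ D" .
  have "(M choose t) ^ 2 * (t * t choose (q * s)) \<le> (k ^ (4 * D + 2)) ^ k ^ D * (t * t) ^ (q * s)"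
    using card_boxes_bound binomial_le_pow[OF red_edges_needed(1)[OF qL]] by (rule mult_le_mono)
  also have "\<dots> = (k ^ c) ^ k ^ D"
    unfolding t_def s_def c_def by (simp add: algebra_simps flip: power_mult power_add)
  finally have N: "real ((M choose t) ^ 2 * (t * t choose (q * s))) \<le> (real k ^ c) ^ k ^ D"
    by (metis of_nat_le_iff of_nat_power)
  have quarter: "real k ^ c * (1 / 2) ^ (k - 1) \<le> 1 / 4"
  proof -
    have "real (8 * k ^ c) \<le> real (2 ^ k)" using big unfolding c_def by (simp only: of_nat_le_iff)
    then have "8 * real k ^ c \<le> 2 ^ k" by simp
    moreover have "(2::real) ^ k = 2 * 2 ^ (k - 1)" using k_ge by (simp flip: power_Suc)
    ultimately show ?thesis by (simp add: field_simps)
  qed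
  have "real ((M choose t) ^ 2 * (t * t choose (q * s))) * ((1 / 2) ^ (k - 1)) ^ k ^ D \<le> 1 / 4"
    by (rule power_mult_le_quarter[OF _ _ quarter N]) (use k_ge in simp_all)
  moreover have "real ((M choose t) ^ 2 * (t * t choose (q * s))) * (1 - \<rho>) ^ (t * t - q * s)
      \<le> real ((M choose t) ^ 2 * (t * t choose (q * s))) * ((1 / 2) ^ (k - 1)) ^ k ^ D"
    using red by (rule mult_left_mono) simp
  ultimately show ?thesis by linarith
qed

text \<open>This is where \<open>q \<ge> 2 * P + 2\<close> enters: with \<open>D = 3 * P + 4\<close> the exponent
  \<open>2 * D + (2 * D + 1) * P - (D - 1) * (2 * P + 2)\<close> equals \<open>D - 2\<close>.\<close>
lemma expected_copies_per_box:
  "real (t * t * q * (4 * (2 * M) ^ P)) * \<rho> ^ q \<le> real (q * 4 * 2 ^ P) * real k ^ (D - 2)"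
proof -
  define e where "e = (D - 1) * (2 * P + 2)"
  have exponent: "2 * D + (2 * D + 1) * P = (D - 2) + e" unfolding e_def D_def by (simp add: algebra_simps)
  have "t * t = k ^ (2 * D)" unfolding t_def by (simp add: mult_2 flip: power_add)
  moreover have "(2 * M) ^ P = 2 ^ P * k ^ ((2 * D + 1) * P)"
    unfolding M_def by (simp only: power_mult_distrib power_mult)
  ultimately have "t * t * q * (4 * (2 * M) ^ P) = q * 4 * 2 ^ P * (k ^ (2 * D) * k ^ ((2 * D + 1) * P))"
    by (simp only: mult_ac)
  also have "\<dots> = q * 4 * 2 ^ P * k ^ (D - 2) * k ^ e"
    by (simp only: exponent mult.assoc flip: power_add)
  finally have count: "real (t * t * q * (4 * (2 * M) ^ P))
      = real (q * 4 * 2 ^ P) * real k ^ (D - 2) * real k ^ e"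
    by (simp only: of_nat_mult of_nat_power)
  have "real (t * t * q * (4 * (2 * M) ^ P)) * \<rho> ^ q
      \<le> real (t * t * q * (4 * (2 * M) ^ P)) * \<rho> ^ (2 * P + 2)"
    using q_ge \<rho>_nonneg \<rho>_le_1 by (intro mult_left_mono power_decreasing) simp_all
  also have "\<rho> ^ (2 * P + 2) = 1 / real k ^ e"
    unfolding \<rho>_def e_def by (simp only: power_one_over of_nat_power power_mult)
  also have "real (t * t * q * (4 * (2 * M) ^ P)) * (1 / real k ^ e)
      = real (q * 4 * 2 ^ P) * real k ^ (D - 2)"
    unfolding count using k_ge by simp
  finally show ?thesis .
qed

lemma red_copies_factor_le:
  defines "w \<equiv> real (3 * (q * 4 * 2 ^ P)) / real k ^ 2"
  shows "real (t * t * q * (4 * (2 * M) ^ P)) ^ s / fact s * \<rho> ^ (q * s) \<le> (w ^ L) ^ k ^ D"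
proof -
  define m where "m = real (t * t * q * (4 * (2 * M) ^ P)) * \<rho> ^ q"
  have "0 \<le> m" unfolding m_def \<rho>_def by simp
  have "real (t * t * q * (4 * (2 * M) ^ P)) ^ s / fact s * \<rho> ^ (q * s) = m ^ s / fact s"
    unfolding m_def by (simp add: power_mult power_mult_distrib)
  also have "\<dots> \<le> (3 * m / s) ^ s" using \<open>0 \<le> m\<close> one_le_s by (rule power_div_fact_le)
  also have "\<dots> \<le> w ^ s"
  proof (rule power_mono)
    have "m \<le> real (q * 4 * 2 ^ P) * real k ^ (D - 2)"
      unfolding m_def by (rule expected_copies_per_box)
    then have "3 * m \<le> real (3 * (q * 4 * 2 ^ P)) * real k ^ (D - 2)" by simp
    then have "3 * m / s \<le> real (3 * (q * 4 * 2 ^ P)) * real k ^ (D - 2) / s"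
      by (rule divide_right_mono) simp
    also have "\<dots> \<le> real (3 * (q * 4 * 2 ^ P)) * real k ^ (D - 2) / real k ^ D"
    proof -
      have "real (k ^ D) \<le> real s" unfolding s_def L_def by (simp only: of_nat_le_iff) simp
      then show ?thesis using k_ge one_le_s by (intro divide_left_mono) simp_all
    qed
    also have "\<dots> = w"
    proof -
      have "D - 2 + 2 = D" using D_ge by simp
      then have "real k ^ D = real k ^ (D - 2) * real k ^ 2" by (metis power_add)
      then show ?thesis unfolding w_def using k_ge by simp
    qed
    finally show "3 * m / s \<le> w" .
  qed (use \<open>0 \<le> m\<close> in simp)
  also have "\<dots> = (w ^ L) ^ k ^ D" unfolding s_def by (simp add: power_mult)
  finally show ?thesis .
qed

lemma many_red_copies_term_le:
  assumes big: "4 * (3 * (q * 4 * 2 ^ P)) ^ L \<le> k"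
  shows "real ((M choose t) ^ 2) * (real (t * t * q * (4 * (2 * M) ^ P)) ^ s / fact s * \<rho> ^ (q * s))
    \<le> 1 / 4"
proof -
  define Z where "Z = real (3 * (q * 4 * 2 ^ P))"
  define w where "w = Z / real k ^ 2"
  have "0 \<le> w" unfolding w_def Z_def by simp
  have boxes: "real ((M choose t) ^ 2) \<le> (real k ^ (4 * D + 2)) ^ k ^ D"
    using card_boxes_bound by (metis of_nat_le_iff of_nat_power)
  have "2 * L = (4 * D + 2) + (4 * D + 4)" unfolding L_def by simp
  then have "real k ^ (2 * L) = real k ^ (4 * D + 2) * real k ^ (4 * D + 4)"
    by (simp only: power_add)
  moreover have "w ^ L = Z ^ L / real k ^ (2 * L)" unfolding w_def by (simp add: power_divide power_mult)
  ultimately have "real k ^ (4 * D + 2) * w ^ L = Z ^ L / real k ^ (4 * D + 4)"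
    using k_ge by simp
  also have "\<dots> \<le> Z ^ L / real k" using k_ge unfolding Z_def
    by (intro divide_left_mono) (simp_all add: self_le_power)
  also have "\<dots> \<le> 1 / 4"
  proof -
    have "real (4 * (3 * (q * 4 * 2 ^ P)) ^ L) \<le> real k" using big by (simp only: of_nat_le_iff)
    then have "4 * Z ^ L \<le> real k" unfolding Z_def by simp
    then show ?thesis using k_ge by (simp add: divide_simps)
  qed
  finally have quarter: "real k ^ (4 * D + 2) * w ^ L \<le> 1 / 4" .
  have "real ((M choose t) ^ 2) * (w ^ L) ^ k ^ D \<le> 1 / 4"
    by (rule power_mult_le_quarter[OF _ _ quarter boxes]) (use k_ge \<open>0 \<le> w\<close> in simp_all)
  moreover have "real ((M choose t) ^ 2) * (real (t * t * q * (4 * (2 * M) ^ P)) ^ s / fact s * \<rho> ^ (q * s))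
      \<le> real ((M choose t) ^ 2) * (w ^ L) ^ k ^ D"
    using red_copies_factor_le unfolding w_def Z_def by (rule mult_left_mono) simp
  ultimately show ?thesis by linarith
qed

end

lemma ramsey_parameters:
  fixes P q C0 :: nat
  assumes q: "2 * P + 2 \<le> q"
  obtains t M s :: nat and \<rho> :: real
  where "1 \<le> t" "C0 * (t * t) \<le> M" "0 \<le> \<rho>" "\<rho> \<le> 1" "q * s \<le> t * t"
    "real ((M choose t) ^ 2) *
      (real (t * t choose (q * s)) * (1 - \<rho>) ^ (t * t - q * s)
       + real (t * t * q * (4 * (2 * M) ^ P)) ^ s / fact s * \<rho> ^ (q * s)) < 1"
proof -
  interpret parameter_exponents P q using q by unfold_locales
  define c where "c = 4 * D + 2 + 2 * D * q * L"
  define k where "k = Max {2, C0, q * L, 8 * (c + 1) ^ (c + 1), 4 * (3 * (q * 4 * 2 ^ P)) ^ L}"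
  have k: "2 \<le> k" "C0 \<le> k" "q * L \<le> k" "8 * (c + 1) ^ (c + 1) \<le> k"
    "4 * (3 * (q * 4 * 2 ^ P)) ^ L \<le> k"
    unfolding k_def by simp_all
  interpret parameter_choice P q k using k(1) by unfold_locales
  have "8 * k ^ c \<le> 2 ^ k" using k(4) by (rule mult_power_le_two_power[rotated]) simp
  then have few: "real ((M choose t) ^ 2 * (t * t choose (q * s))) * (1 - \<rho>) ^ (t * t - q * s) \<le> 1 / 4"
    using k(3) unfolding c_def by (intro few_red_edges_term_le) simp_all
  have many: "real ((M choose t) ^ 2) *
      (real (t * t * q * (4 * (2 * M) ^ P)) ^ s / fact s * \<rho> ^ (q * s)) \<le> 1 / 4"
    using k(5) by (intro many_red_copies_term_le) simp
  show thesis
  proof (rule that)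
    show "1 \<le> t" "0 \<le> \<rho>" "\<rho> \<le> 1" by (fact one_le_t \<rho>_nonneg \<rho>_le_1)+
    show "C0 * (t * t) \<le> M" using k(2) M_eq by simp
    show "q * s \<le> t * t" using k(3) by (intro red_edges_needed) simp
    show "real ((M choose t) ^ 2) *
      (real (t * t choose (q * s)) * (1 - \<rho>) ^ (t * t - q * s)
       + real (t * t * q * (4 * (2 * M) ^ P)) ^ s / fact s * \<rho> ^ (q * s)) < 1"
      using few many by (simp only: distrib_left of_nat_mult mult.assoc)
  qed
qed

lemma br_complete_bipartite_superquadratic:
  assumes "bipartite_graph V E" "3 \<le> card V" "2 * card V - 2 \<le> card E"
  shows "\<exists>t\<ge>1. C0 * (t * t) < br V E (complete_bipartite_verts t) (complete_bipartite_edges t)"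
proof -
  interpret simple_graph V E using assms(1) by unfold_locales (simp add: bipartite_graph_def)
  have "E \<noteq> {}" using assms(2,3) by auto
  have "2 * (card V - 2) + 2 \<le> card E" using assms(2,3) by simp
  then obtain t M s \<rho> where params: "1 \<le> t" "C0 * (t * t) \<le> M" "0 \<le> \<rho>" "\<rho> \<le> 1"
    "card E * s \<le> t * t"
    "real ((M choose t) ^ 2) *
      (real (t * t choose (card E * s)) * (1 - \<rho>) ^ (t * t - card E * s)
       + real (t * t * card E * (4 * (2 * M) ^ (card V - 2))) ^ s / fact s * \<rho> ^ (card E * s)) < 1"
    by (rule ramsey_parameters)
  then obtain col where "good_colouring M t s col" using exists_good_colouring by blast
  then have "\<not> bip_arrows M V E (complete_bipartite_verts t) (complete_bipartite_edges t)"
    using not_arrows_complete_bipartite \<open>E \<noteq> {}\<close> params(1) by blast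
  then have "M < br V E (complete_bipartite_verts t) (complete_bipartite_edges t)"
    using bip_arrows_exists[OF assms(1) bipartite_graph_complete_bipartite] less_br by blast
  then show ?thesis using params(1,2) by (intro exI[of _ t]) simp
qed

theorem mainTheorem2:
  fixes V :: "'a set" and E :: "'a set set"
  assumes "bipartite_graph V E"
    and "card V \<ge> 3"
    and "card E \<ge> 2 * card V - 2"
  shows "\<not> bip_ramsey_size_linear V E"
proof
  assume "bip_ramsey_size_linear V E"
  then obtain C :: real where C: "\<forall>(V'::nat set) E'. bipartite_graph V' E' \<and> no_isolated V' E' \<longrightarrow>
      real (br V E V' E') \<le> C * real (card E')"
    unfolding bip_ramsey_size_linear_def by blast
  obtain t where "1 \<le> t"
    and br: "nat \<lceil>C\<rceil> * (t * t) < br V E (complete_bipartite_verts t) (complete_bipartite_edges t)"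
    using br_complete_bipartite_superquadratic[OF assms] by blast
  have "real (br V E (complete_bipartite_verts t) (complete_bipartite_edges t))
      \<le> C * real (card (complete_bipartite_edges t))"
    using C bipartite_graph_complete_bipartite no_isolated_complete_bipartite[OF \<open>1 \<le> t\<close>] by blast
  also have "\<dots> \<le> real (nat \<lceil>C\<rceil>) * real (t * t)"
    using card_complete_bipartite_edges_le[of t, folded of_nat_le_iff[where 'a = real]]
    by (intro mult_mono) (auto simp: real_nat_ceiling_ge)
  finally show False using br by (simp flip: of_nat_mult)
qed

end
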